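(* Let $n\in\mathbb N$, let $f$ be extremal for $M_n$ with $f(0)=e^{-t}$, $t>0$, written as $f(z)=\exp\big(-\sum_{j=1}^N\lambda_j\frac{1+\alpha_jz}{1-\alpha_jz}\big)$, and let $g(z)=-\sum_{j=1}^N\lambda_j\frac{1+\alpha_jz}{1-\alpha_jz}$ (a rational function, so $f=e^g$). Then $g$ has exactly $N$ zeros $\beta_1,\dots,\beta_N$, all lying on $\partial\mathbb D$, and \[g(z)=t\,\frac{\prod_{j=1}^N(z-\beta_j)}{\prod_{j=1}^N(z-\overline{\alpha_j})}.\]
   Context: $\mathbb D$ is the open unit disc; $\mathcal B_0=\{f$ holomorphic on $\mathbb D: 0<|f|\le1\}$; $M_n(f)=\mathrm{Re}\,a_n$; $f\in\mathcal B_0$ is extremal for $M_n$ if $M_n(f)\ge M_n(F)$ for all $F\in\mathcal B_0$. It is known that an extremal $f$ with $f(0)>0$ has the displayed form with $1\le N\le n$, $\lambda_j>0$ and distinct $\alpha_j\in\partial\mathbb D$. *)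

theory Defs
  imports "HOL-Complex_Analysis.Complex_Analysis"
begin

definition B0 :: "(complex \<Rightarrow> complex) set" where
  "B0 = {f. f holomorphic_on ball 0 1 \<and> (\<forall>z\<in>ball 0 1. 0 < norm (f z) \<and> norm (f z) \<le> 1)}"

definition taylor_coeff :: "nat \<Rightarrow> (complex \<Rightarrow> complex) \<Rightarrow> complex" where
  "taylor_coeff n f = (deriv ^^ n) f 0 / of_nat (fact n)"

definition M :: "nat \<Rightarrow> (complex \<Rightarrow> complex) \<Rightarrow> real" where
  "M n f = Re (taylor_coeff n f)"

definition extremal :: "nat \<Rightarrow> (complex \<Rightarrow> complex) \<Rightarrow> bool" where
  "extremal n f \<longleftrightarrow> f \<in> B0 \<and> (\<forall>F\<in>B0. M n F \<le> M n f)"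

end

theory Submission
  imports Defs "HOL-Computational_Algebra.Fundamental_Theorem_Algebra"
begin

text \<open>
  Since \<open>|\<alpha>\<^sub>j| = 1\<close>, each Cayley term satisfies
  \<open>(1 + \<alpha>\<^sub>j z)/(1 - \<alpha>\<^sub>j z) \<cdot> (z - conj \<alpha>\<^sub>j) = -(z + conj \<alpha>\<^sub>j)\<close>, so multiplying \<open>g\<close> by
  \<open>Q(z) = \<Prod>(z - conj \<alpha>\<^sub>j)\<close> gives a polynomial \<open>P\<close> of degree \<open>N\<close> with leading coefficient
  \<open>\<Sum>\<lambda>\<^sub>j = t\<close> (read off from \<open>f(0) = e\<^sup>-\<^sup>t\<close>); distinctness of the \<open>\<alpha>\<^sub>j\<close> makes \<open>P\<close> nonzero at
  the poles, so the zeros of \<open>g\<close> are exactly the roots of \<open>P\<close>.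
  They lie on the circle because \<open>Re ((1 + w)/(1 - w)) = (1 - |w|\<^sup>2)/|1 - w|\<^sup>2\<close>, and they are
  simple because for \<open>|z| = 1\<close> one has \<open>z g'(z) = \<Sum> 2\<lambda>\<^sub>j/|1 - \<alpha>\<^sub>j z|\<^sup>2 > 0\<close>.
\<close>

lemma mult_cnj_self_of_norm_1:
  fixes a :: complex
  assumes "norm a = 1"
  shows "a * cnj a = 1"
  using complex_norm_square[of a] assms by simp

lemma mult_eq_1_iff_eq_cnj:
  fixes a z :: complex
  assumes "norm a = 1"
  shows "a * z = 1 \<longleftrightarrow> z = cnj a"
  using mult_cnj_self_of_norm_1[OF assms] assms
  by (metis mult.commute nonzero_eq_divide_eq norm_zero zero_neq_one)

lemma cayley_mult_linear:
  fixes a z :: complex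
  assumes "norm a = 1" "a * z \<noteq> 1"
  shows "(1 + a * z) / (1 - a * z) * (z - cnj a) = - (z + cnj a)"
proof -
  have "(1 + a * z) * (z - cnj a) = - ((z + cnj a) * (1 - a * z))"
    using mult_cnj_self_of_norm_1[OF assms(1)] by (simp add: algebra_simps)
  with assms(2) show ?thesis by (simp add: field_simps)
qed

lemma Re_cayley:
  fixes w :: complex
  assumes "w \<noteq> 1"
  shows "Re ((1 + w) / (1 - w)) = (1 - norm w ^ 2) / norm (1 - w) ^ 2"
proof -
  have "(1 + w) / (1 - w) = (1 + w) * cnj (1 - w) / ((1 - w) * cnj (1 - w))"
    using assms by simp
  also have "(1 + w) * cnj (1 - w) = of_real (1 - norm w ^ 2) + (w - cnj w)"
    by (simp add: algebra_simps flip: complex_norm_square)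
  also have "(1 - w) * cnj (1 - w) = of_real (norm (1 - w) ^ 2)"
    by (rule complex_norm_square[symmetric])
  finally show ?thesis by simp
qed

lemma div_square_one_minus_on_circle:
  fixes w :: complex
  assumes "norm w = 1" "w \<noteq> 1"
  shows "w / (1 - w) ^ 2 = - of_real (1 / norm (1 - w) ^ 2)"
proof -
  have "w \<noteq> 0" using assms(1) by auto
  have "cnj (1 - w) = - (1 - w) / w"
    using mult_cnj_self_of_norm_1[OF assms(1)] \<open>w \<noteq> 0\<close> by (simp add: field_simps)
  then have "of_real (norm (1 - w) ^ 2) = - ((1 - w) ^ 2) / w"
    by (simp only: complex_norm_square) (simp add: power2_eq_square algebra_simps)
  with assms show ?thesis by (simp add: field_simps)
qed

lemma has_field_derivative_cayley:
  fixes a z :: complex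
  assumes "a * z \<noteq> 1"
  shows "((\<lambda>z. (1 + a * z) / (1 - a * z)) has_field_derivative 2 * a / (1 - a * z) ^ 2) (at z)"
  using assms by (auto intro!: derivative_eq_intros simp: field_simps power2_eq_square)

text \<open>
  \<open>herglotz\<close> is the Herglotz transform of the measure \<open>\<Sum> \<lambda>\<^sub>j \<delta>\<^bsub>conj \<alpha>\<^sub>j\<^esub>\<close>;
  the function \<open>g\<close> of the theorem is \<open>-herglotz\<close>.
\<close>
locale discrete_herglotz =
  fixes A :: "'a set" and lam :: "'a \<Rightarrow> real" and \<alpha> :: "'a \<Rightarrow> complex"
  assumes finite_A: "finite A"
    and A_nonempty: "A \<noteq> {}"
    and lam_pos: "j \<in> A \<Longrightarrow> lam j > 0"
    and norm_\<alpha>: "j \<in> A \<Longrightarrow> norm (\<alpha> j) = 1"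
    and inj_\<alpha>: "inj_on \<alpha> A"
begin

definition herglotz :: "complex \<Rightarrow> complex" where
  "herglotz z = (\<Sum>j\<in>A. complex_of_real (lam j) * (1 + \<alpha> j * z) / (1 - \<alpha> j * z))"

definition poles :: "complex set" where
  "poles = (\<lambda>j. cnj (\<alpha> j)) ` A"

definition denom :: "complex poly" where
  "denom = (\<Prod>j\<in>A. [:- cnj (\<alpha> j), 1:])"

definition numer :: "complex poly" where
  "numer = (\<Sum>j\<in>A. smult (of_real (lam j)) ([:cnj (\<alpha> j), 1:] * (\<Prod>i\<in>A - {j}. [:- cnj (\<alpha> i), 1:])))"

lemma notin_poles_iff: "z \<notin> poles \<longleftrightarrow> (\<forall>j\<in>A. \<alpha> j * z \<noteq> 1)"
  unfolding poles_def using mult_eq_1_iff_eq_cnj[OF norm_\<alpha>] by auto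

lemma open_Compl_poles: "open (- poles)"
  unfolding poles_def using finite_A by (intro open_Compl finite_imp_closed) auto

lemma poly_denom_eq_0_iff: "poly denom z = 0 \<longleftrightarrow> z \<in> poles"
  unfolding denom_def poles_def poly_prod using finite_A by (auto simp: prod_zero_iff)

lemma herglotz_mult_denom:
  assumes "z \<notin> poles"
  shows "herglotz z * poly denom z = - poly numer z"
proof -
  have "of_real (lam j) * (1 + \<alpha> j * z) / (1 - \<alpha> j * z) * poly denom z
        = - poly (smult (of_real (lam j)) ([:cnj (\<alpha> j), 1:] * (\<Prod>i\<in>A - {j}. [:- cnj (\<alpha> i), 1:]))) z"
    if j: "j \<in> A" for j
  proof -
    define c where "c = (1 + \<alpha> j * z) / (1 - \<alpha> j * z)"
    define P where "P = (\<Prod>i\<in>A - {j}. poly [:- cnj (\<alpha> i), 1:] z)"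
    have "poly denom z = (z - cnj (\<alpha> j)) * P"
      unfolding denom_def poly_prod P_def using prod.remove[OF finite_A j] by simp
    moreover have "c * (z - cnj (\<alpha> j)) = - (z + cnj (\<alpha> j))"
      unfolding c_def using cayley_mult_linear norm_\<alpha> assms j notin_poles_iff by blast
    ultimately have "of_real (lam j) * c * poly denom z = - (of_real (lam j) * (z + cnj (\<alpha> j)) * P)"
      by (metis mult.assoc mult_minus_left mult_minus_right)
    then show ?thesis
      by (simp add: c_def P_def poly_prod algebra_simps)
  qed
  then show ?thesis
    unfolding herglotz_def numer_def poly_sum sum_distrib_right
    by (simp add: sum_negf)
qed

lemma sum_lam_pos: "(\<Sum>j\<in>A. lam j) > 0"
  using finite_A A_nonempty lam_pos by (rule sum_pos)

lemma monic_numer_summand: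
  assumes "j \<in> A"
  shows "degree ([:cnj (\<alpha> j), 1:] * (\<Prod>i\<in>A - {j}. [:- cnj (\<alpha> i), 1:])) = card A"
    and "lead_coeff ([:cnj (\<alpha> j), 1:] * (\<Prod>i\<in>A - {j}. [:- cnj (\<alpha> i), 1:])) = 1"
proof -
  have "card A = Suc (card (A - {j}))"
    using assms finite_A by (metis card_Suc_Diff1)
  then show "degree ([:cnj (\<alpha> j), 1:] * (\<Prod>i\<in>A - {j}. [:- cnj (\<alpha> i), 1:])) = card A"
    using finite_A by (subst degree_mult_eq) (auto simp: degree_prod_sum_eq prod_zero_iff)
  show "lead_coeff ([:cnj (\<alpha> j), 1:] * (\<Prod>i\<in>A - {j}. [:- cnj (\<alpha> i), 1:])) = 1"
    unfolding lead_coeff_mult lead_coeff_prod by simp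
qed

lemma coeff_numer_card: "coeff numer (card A) = of_real (\<Sum>j\<in>A. lam j)"
  unfolding numer_def coeff_sum using monic_numer_summand by simp

lemma degree_numer: "degree numer = card A"
proof (rule antisym)
  show "degree numer \<le> card A"
    unfolding numer_def using finite_A monic_numer_summand(1)
    by (intro degree_sum_le) (auto intro: order.trans[OF degree_smult_le])
  show "card A \<le> degree numer"
    using coeff_numer_card sum_lam_pos by (intro le_degree) (simp flip: of_real_sum)
qed

lemma lead_coeff_numer: "lead_coeff numer = of_real (\<Sum>j\<in>A. lam j)"
  using coeff_numer_card degree_numer by simp

lemma poly_numer_at_pole:
  assumes k: "k \<in> A"
  shows "poly numer (cnj (\<alpha> k))
         = of_real (lam k) * (2 * cnj (\<alpha> k)) * (\<Prod>i\<in>A - {k}. cnj (\<alpha> k) - cnj (\<alpha> i))"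
proof -
  let ?z = "cnj (\<alpha> k)"
  have vanish: "(\<Prod>i\<in>A - {j}. ?z - cnj (\<alpha> i)) = 0" if "j \<in> A - {k}" for j
    using finite_A k that by (subst prod_zero_iff) auto
  have "poly numer ?z = (\<Sum>j\<in>A. of_real (lam j) * (?z + cnj (\<alpha> j)) * (\<Prod>i\<in>A - {j}. ?z - cnj (\<alpha> i)))"
    unfolding numer_def poly_sum by (simp add: poly_prod algebra_simps)
  also have "\<dots> = of_real (lam k) * (2 * ?z) * (\<Prod>i\<in>A - {k}. ?z - cnj (\<alpha> i))"
    by (subst sum.remove[OF finite_A k]) (simp add: vanish)
  finally show ?thesis .
qed

lemma poly_numer_neq_0_at_poles:
  assumes "z \<in> poles"
  shows "poly numer z \<noteq> 0"
proof -
  obtain k where k: "k \<in> A" and z: "z = cnj (\<alpha> k)"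
    using assms unfolding poles_def by blast
  have "\<alpha> k \<noteq> 0" using norm_\<alpha>[OF k] by auto
  moreover have "cnj (\<alpha> k) \<noteq> cnj (\<alpha> i)" if "i \<in> A - {k}" for i
    using inj_onD[OF inj_\<alpha>] k that by auto
  ultimately show ?thesis
    unfolding z poly_numer_at_pole[OF k] using lam_pos[OF k] finite_A by (auto simp: prod_zero_iff)
qed

lemma poly_numer_eq_0_iff: "poly numer z = 0 \<longleftrightarrow> z \<notin> poles \<and> herglotz z = 0"
  using poly_numer_neq_0_at_poles herglotz_mult_denom poly_denom_eq_0_iff
  by (metis minus_equation_iff mult_eq_0_iff neg_0_equal_iff_equal)

lemma Re_herglotz:
  assumes "z \<notin> poles"
  shows "Re (herglotz z) = (1 - norm z ^ 2) * (\<Sum>j\<in>A. lam j / norm (1 - \<alpha> j * z) ^ 2)"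
proof -
  have "Re (of_real (lam j) * (1 + \<alpha> j * z) / (1 - \<alpha> j * z))
        = (1 - norm z ^ 2) * (lam j / norm (1 - \<alpha> j * z) ^ 2)" if j: "j \<in> A" for j
  proof -
    have "\<alpha> j * z \<noteq> 1" using assms j notin_poles_iff by blast
    then have "Re ((1 + \<alpha> j * z) / (1 - \<alpha> j * z)) = (1 - norm z ^ 2) / norm (1 - \<alpha> j * z) ^ 2"
      using Re_cayley norm_\<alpha>[OF j] by (simp add: norm_mult)
    moreover have "Re (of_real c * w) = c * Re w" for c w
      by simp
    ultimately show ?thesis
      by (simp only: times_divide_eq_right[symmetric]) simp
  qed
  then show ?thesis
    unfolding herglotz_def Re_sum sum_distrib_left by (rule sum.cong[OF refl])
qed

lemma norm_eq_1_if_herglotz_eq_0: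
  assumes "z \<notin> poles" "herglotz z = 0"
  shows "norm z = 1"
proof -
  have "(\<Sum>j\<in>A. lam j / norm (1 - \<alpha> j * z) ^ 2) > 0"
    using finite_A A_nonempty
  proof (rule sum_pos)
    fix j assume j: "j \<in> A"
    then have "1 - \<alpha> j * z \<noteq> 0" using assms(1) notin_poles_iff by auto
    then show "lam j / norm (1 - \<alpha> j * z) ^ 2 > 0" using lam_pos[OF j] by simp
  qed
  with Re_herglotz[OF assms(1)] assms(2) have "norm z ^ 2 = 1" by simp
  then show ?thesis by (simp add: power2_eq_1_iff) (use norm_ge_zero[of z] in linarith)
qed

lemma herglotz_has_field_derivative:
  assumes "z \<notin> poles"
  shows "(herglotz has_field_derivative (\<Sum>j\<in>A. of_real (lam j) * (2 * \<alpha> j / (1 - \<alpha> j * z) ^ 2))) (at z)"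
proof -
  have "((\<lambda>z. of_real (lam j) * ((1 + \<alpha> j * z) / (1 - \<alpha> j * z)))
          has_field_derivative of_real (lam j) * (2 * \<alpha> j / (1 - \<alpha> j * z) ^ 2)) (at z)"
    if "j \<in> A" for j
    using assms that notin_poles_iff by (intro DERIV_cmult has_field_derivative_cayley) blast
  then have "((\<lambda>z. \<Sum>j\<in>A. of_real (lam j) * ((1 + \<alpha> j * z) / (1 - \<alpha> j * z)))
          has_field_derivative (\<Sum>j\<in>A. of_real (lam j) * (2 * \<alpha> j / (1 - \<alpha> j * z) ^ 2))) (at z)"
    by (rule DERIV_sum)
  then show ?thesis
    by (simp add: herglotz_def[abs_def])
qed

lemma Re_mult_deriv_herglotz_neg:
  assumes "z \<notin> poles" "norm z = 1"
  shows "Re (z * deriv herglotz z) < 0"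
proof -
  have "z * (of_real (lam j) * (2 * \<alpha> j / (1 - \<alpha> j * z) ^ 2))
        = - of_real (2 * lam j / norm (1 - \<alpha> j * z) ^ 2)" if j: "j \<in> A" for j
  proof -
    have w: "\<alpha> j * z \<noteq> 1" "norm (\<alpha> j * z) = 1"
      using assms j notin_poles_iff norm_\<alpha>[OF j] by (auto simp: norm_mult)
    have "z * (of_real (lam j) * (2 * \<alpha> j / (1 - \<alpha> j * z) ^ 2))
          = 2 * of_real (lam j) * (\<alpha> j * z / (1 - \<alpha> j * z) ^ 2)"
      by (simp add: algebra_simps)
    also have "\<dots> = - of_real (2 * lam j / norm (1 - \<alpha> j * z) ^ 2)"
      unfolding div_square_one_minus_on_circle[OF w(2,1)] by simp
    finally show ?thesis .
  qed
  then have "z * deriv herglotz z = - of_real (\<Sum>j\<in>A. 2 * lam j / norm (1 - \<alpha> j * z) ^ 2)"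
    using DERIV_imp_deriv[OF herglotz_has_field_derivative[OF assms(1)]]
    by (simp add: sum_distrib_left sum_negf)
  moreover have "(\<Sum>j\<in>A. 2 * lam j / norm (1 - \<alpha> j * z) ^ 2) > 0"
    using finite_A A_nonempty
  proof (rule sum_pos)
    fix j assume j: "j \<in> A"
    then have "1 - \<alpha> j * z \<noteq> 0" using assms(1) notin_poles_iff by auto
    then show "2 * lam j / norm (1 - \<alpha> j * z) ^ 2 > 0" using lam_pos[OF j] by simp
  qed
  ultimately show ?thesis by simp
qed

lemma rsquarefree_numer: "rsquarefree numer"
  unfolding rsquarefree_roots
proof (intro allI notI)
  fix b assume b: "poly numer b = 0 \<and> poly (pderiv numer) b = 0"
  then have b_regular: "b \<notin> poles" and "herglotz b = 0"
    using poly_numer_eq_0_iff by auto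
  have dH: "(herglotz has_field_derivative deriv herglotz b) (at b)"
    using herglotz_has_field_derivative[OF b_regular] DERIV_imp_deriv by metis
  have "((\<lambda>z. herglotz z * poly denom z) has_field_derivative deriv herglotz b * poly denom b) (at b)"
    using DERIV_mult[OF dH poly_DERIV] \<open>herglotz b = 0\<close> by simp
  moreover have "((\<lambda>z. herglotz z * poly denom z) has_field_derivative - poly (pderiv numer) b) (at b)"
    by (rule has_field_derivative_transform_within_open[OF DERIV_minus[OF poly_DERIV] open_Compl_poles])
       (use b_regular herglotz_mult_denom in auto)
  ultimately have "deriv herglotz b * poly denom b = 0"
    using b DERIV_unique by fastforce
  then have "deriv herglotz b = 0"
    using b_regular poly_denom_eq_0_iff by simp
  then show False
    using Re_mult_deriv_herglotz_neg[OF b_regular norm_eq_1_if_herglotz_eq_0[OF b_regular \<open>herglotz b = 0\<close>]]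
    by simp
qed

definition zeros :: "complex set" where
  "zeros = {z. z \<notin> poles \<and> herglotz z = 0}"

lemma zeros_eq_roots_numer: "zeros = {z. poly numer z = 0}"
  unfolding zeros_def using poly_numer_eq_0_iff by auto

lemma numer_factorization:
  "numer = smult (of_real (\<Sum>j\<in>A. lam j)) (\<Prod>z\<in>zeros. [:- z, 1:])"
  using complex_poly_decompose_rsquarefree[OF rsquarefree_numer]
  unfolding zeros_eq_roots_numer lead_coeff_numer by simp

lemma finite_zeros: "finite zeros"
proof -
  have "numer \<noteq> 0" using lead_coeff_numer sum_lam_pos by (auto simp flip: of_real_sum)
  then show ?thesis
    unfolding zeros_eq_roots_numer by (rule poly_roots_finite)
qed

lemma card_zeros: "card zeros = card A"
proof -
  have "degree numer = card zeros"
    by (subst numer_factorization) (use sum_lam_pos in \<open>simp add: degree_prod_sum_eq flip: of_real_sum\<close>)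
  then show ?thesis using degree_numer by simp
qed

lemma zeros_on_circle: "z \<in> zeros \<Longrightarrow> norm z = 1"
  unfolding zeros_def using norm_eq_1_if_herglotz_eq_0 by blast

lemma herglotz_factorization:
  assumes "z \<notin> poles"
  shows "herglotz z = - of_real (\<Sum>j\<in>A. lam j) * (\<Prod>r\<in>zeros. z - r) / (\<Prod>j\<in>A. z - cnj (\<alpha> j))"
proof -
  have "poly denom z \<noteq> 0" using assms poly_denom_eq_0_iff by simp
  moreover have "poly numer z = of_real (\<Sum>j\<in>A. lam j) * (\<Prod>r\<in>zeros. z - r)"
    by (subst numer_factorization) (simp add: poly_prod)
  ultimately show ?thesis
    using herglotz_mult_denom[OF assms] unfolding denom_def poly_prod
    by (simp add: field_simps)
qed

end

theorem lemma8:
  fixes n N :: nat and f g :: "complex \<Rightarrow> complex" and t :: real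
    and lam :: "nat \<Rightarrow> real" and \<alpha> :: "nat \<Rightarrow> complex"
  assumes ext: "extremal n f"
    and f0: "f 0 = complex_of_real (exp (- t))"
    and tpos: "t > 0"
    and N: "1 \<le> N" "N \<le> n"
    and lam_pos: "\<And>j. j \<in> {1..N} \<Longrightarrow> lam j > 0"
    and \<alpha>_circ: "\<And>j. j \<in> {1..N} \<Longrightarrow> norm (\<alpha> j) = 1"
    and \<alpha>_dist: "inj_on \<alpha> {1..N}"
    and g_def: "g = (\<lambda>z. - (\<Sum>j=1..N. complex_of_real (lam j) * (1 + \<alpha> j * z) / (1 - \<alpha> j * z)))"
    and f_form: "\<And>z. z \<in> ball 0 1 \<Longrightarrow> f z = exp (g z)"
  shows "\<exists>\<beta> :: nat \<Rightarrow> complex.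
           inj_on \<beta> {1..N}
         \<and> (\<forall>j\<in>{1..N}. norm (\<beta> j) = 1)
         \<and> {z. (\<forall>j\<in>{1..N}. \<alpha> j * z \<noteq> 1) \<and> g z = 0} = \<beta> ` {1..N}
         \<and> (\<forall>z. (\<forall>j\<in>{1..N}. \<alpha> j * z \<noteq> 1) \<longrightarrow>
                g z = complex_of_real t * (\<Prod>j=1..N. (z - \<beta> j)) / (\<Prod>j=1..N. (z - cnj (\<alpha> j))))"
proof -
  interpret discrete_herglotz "{1..N}" lam \<alpha>
    using N lam_pos \<alpha>_circ \<alpha>_dist by unfold_locales auto
  have g_eq: "g z = - herglotz z" for z
    unfolding g_def herglotz_def by simp
  have "exp (g 0) = of_real (exp (- t))"
    using f0 f_form[of 0] by simp
  moreover have "g 0 = of_real (- (\<Sum>j=1..N. lam j))"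
    unfolding g_eq herglotz_def by simp
  ultimately have "exp (- t) = exp (- (\<Sum>j=1..N. lam j))"
    by (metis exp_of_real of_real_eq_iff)
  then have sum_lam: "(\<Sum>j=1..N. lam j) = t"
    by simp
  obtain \<beta> where \<beta>: "bij_betw \<beta> {1..N} zeros"
    using ex_bij_betw_nat_finite_1[OF finite_zeros] card_zeros by auto
  show ?thesis
  proof (intro exI conjI ballI allI impI)
    show "inj_on \<beta> {1..N}"
      using \<beta> by (rule bij_betw_imp_inj_on)
    show "norm (\<beta> j) = 1" if "j \<in> {1..N}" for j
      using zeros_on_circle bij_betwE[OF \<beta>] that by blast
    show "{z. (\<forall>j\<in>{1..N}. \<alpha> j * z \<noteq> 1) \<and> g z = 0} = \<beta> ` {1..N}"
      using bij_betw_imp_surj_on[OF \<beta>] unfolding zeros_def notin_poles_iff g_eq by auto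
    show "g z = complex_of_real t * (\<Prod>j=1..N. z - \<beta> j) / (\<Prod>j=1..N. z - cnj (\<alpha> j))"
      if "\<forall>j\<in>{1..N}. \<alpha> j * z \<noteq> 1" for z
      using herglotz_factorization[of z] that prod.reindex_bij_betw[OF \<beta>, of "\<lambda>r. z - r"]
      unfolding g_eq notin_poles_iff sum_lam by simp
  qed
qed

end
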